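(* Assume $\sum_{i=1}^M b_i\ge1$ and let $\mathbf r^\star(\epsilon)$ be the energy-adequate solution. Then $\lim_{\epsilon\to0^+}|\bar\Delta(\mathbf r^\star(\epsilon))-\bar\Delta_{\mathrm{opt}}(\epsilon)|=0$, and $$\lim_{\epsilon\to0^+}\bar\Delta_{\mathrm{opt}}(\epsilon)=\sum_{i=1}^M\Big[\frac{w_i}{\min\{b_i,\beta^\star\sqrt{w_i}\}}+w_i\Big].$$
   Context: Fix an integer $M\ge1$, weights $w_1,\dots,w_M>0$, constants $b_1,\dots,b_M>0$, and $\epsilon>0$. For $\mathbf r\in(0,\infty)^M$ write $S(\mathbf r)=\sum_{i=1}^M r_i$ and define $$\bar\Delta(\mathbf r)=\sum_{l=1}^M \frac{w_l e^{-r_l\epsilon}}{r_l}\, e^{\epsilon S(\mathbf r)}\big(1+S(\mathbf r)\big)+\sum_{l=1}^M w_l,\qquad \sigma_l(\mathbf r)=\frac{(1-e^{-r_l\epsilon})S(\mathbf r)+r_le^{-r_l\epsilon}}{S(\mathbf r)+1}.$$ Problem 1: minimize $\bar\Delta(\mathbf r)$ over $\mathbf r\in(0,\infty)^M$ subject to $\sigma_l(\mathbf r)\le b_l$ for all $l$; its optimal (infimum) value is $\bar\Delta_{\mathrm{opt}}(\epsilon)$. Energy-adequate solution (when $\sum_i b_i\ge1$): let $\beta^\star\in[0,\max_l b_l/\sqrt{w_l}]$ be the root of $\sum_{i=1}^M\min\{b_i,\beta^\star\sqrt{w_i}\}=1$, let $x^\star=-\tfrac12+\sqrt{\tfrac14+\tfrac1\epsilon}$,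 and set $r^\star_l=\min\{b_l,\beta^\star\sqrt{w_l}\}\,x^\star$. *)

theory Defs
  imports "HOL-Analysis.Analysis"
begin

text \<open>Indices are 0..M-1 (i.e. the set {..<M}); vectors r are functions nat => real,
 only the values at indices < M matter.\<close>

definition Ssum :: "nat \<Rightarrow> (nat \<Rightarrow> real) \<Rightarrow> real" where
  "Ssum M r = (\<Sum>i<M. r i)"

definition Delta_bar :: "nat \<Rightarrow> (nat \<Rightarrow> real) \<Rightarrow> real \<Rightarrow> (nat \<Rightarrow> real) \<Rightarrow> real" where
  "Delta_bar M w eps r =
     (\<Sum>l<M. w l * exp (- r l * eps) / r l) * exp (eps * Ssum M r) * (1 + Ssum M r)
     + (\<Sum>l<M. w l)"

definition sigma :: "nat \<Rightarrow> real \<Rightarrow> (nat \<Rightarrow> real) \<Rightarrow> nat \<Rightarrow> real" where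
  "sigma M eps r l =
     ((1 - exp (- r l * eps)) * Ssum M r + r l * exp (- r l * eps)) / (Ssum M r + 1)"

definition feasible :: "nat \<Rightarrow> (nat \<Rightarrow> real) \<Rightarrow> real \<Rightarrow> (nat \<Rightarrow> real) \<Rightarrow> bool" where
  "feasible M b eps r \<longleftrightarrow> (\<forall>l<M. 0 < r l \<and> sigma M eps r l \<le> b l)"

definition Delta_opt :: "nat \<Rightarrow> (nat \<Rightarrow> real) \<Rightarrow> (nat \<Rightarrow> real) \<Rightarrow> real \<Rightarrow> real" where
  "Delta_opt M w b eps = Inf {Delta_bar M w eps r | r. feasible M b eps r}"

definition x_star :: "real \<Rightarrow> real" where
  "x_star eps = - 1/2 + sqrt (1/4 + 1/eps)"

definition r_star :: "(nat \<Rightarrow> real) \<Rightarrow> (nat \<Rightarrow> real) \<Rightarrow> real \<Rightarrow> real \<Rightarrow> nat \<Rightarrow> real" where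
  "r_star w b beta eps l = min (b l) (beta * sqrt (w l)) * x_star eps"

end

theory Submission
  imports Defs "HOL-Real_Asymp.Real_Asymp"
begin

text \<open>Write \<open>c\<^sub>i = min b\<^sub>i (\<beta> \<surd>w\<^sub>i)\<close>, so \<open>\<Sum> c\<^sub>i = 1\<close>. For any feasible \<open>r\<close> with
  \<open>S = \<Sum> r\<^sub>i\<close>, the shares \<open>p\<^sub>l = r\<^sub>l / (1 + S)\<close> satisfy \<open>p\<^sub>l \<le> \<sigma>\<^sub>l \<le> b\<^sub>l\<close> and \<open>\<Sum> p\<^sub>l \<le> 1\<close>,
  and \<open>\<Delta>(r) \<ge> \<Sum> w\<^sub>l / p\<^sub>l + \<Sum> w\<^sub>l\<close> because \<open>exp (\<epsilon> (S - r\<^sub>l)) \<ge> 1\<close>. Minimising \<open>\<Sum> w\<^sub>l / p\<^sub>l\<close> under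
  \<open>p\<^sub>l \<le> b\<^sub>l\<close>, \<open>\<Sum> p\<^sub>l \<le> 1\<close> is a water-filling problem solved by \<open>p = c\<close>
  (with Lagrange multiplier \<open>1 / \<beta>\<^sup>2\<close>), so every feasible
  value is at least \<open>L = \<Sum> (w\<^sub>i / c\<^sub>i + w\<^sub>i)\<close>. Conversely \<open>r\<^sup>\<star>\<close> is feasible for every \<open>\<epsilon> > 0\<close>
  and \<open>\<Delta>(r\<^sup>\<star>) \<rightarrow> L\<close> as \<open>\<epsilon> \<rightarrow> 0\<^sup>+\<close>, so \<open>\<Delta>\<^sub>o\<^sub>p\<^sub>t\<close> is squeezed between \<open>L\<close> and \<open>\<Delta>(r\<^sup>\<star>)\<close>.\<close>

lemma water_filling_term_bound:
  fixes w b beta p :: real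
  assumes "w > 0" "b > 0" "beta > 0" "0 < p" "p \<le> b"
  shows "w / min b (beta * sqrt w) + (min b (beta * sqrt w) - p) / beta\<^sup>2 \<le> w / p"
proof -
  define c where "c = min b (beta * sqrt w)"
  have c_pos: "c > 0" using assms by (simp add: c_def)
  have tangent: "w / c + (w / c\<^sup>2) * (c - p) \<le> w / p"
  proof -
    have "w / p - (w / c + (w / c\<^sup>2) * (c - p)) = w * (c - p)\<^sup>2 / (p * c\<^sup>2)"
      using c_pos assms by (simp add: field_simps power2_eq_square)
    moreover have "0 \<le> w * (c - p)\<^sup>2 / (p * c\<^sup>2)" using c_pos assms by simp
    ultimately show ?thesis by linarith
  qed
  \<comment> \<open>\<open>w / c\<^sup>2 \<ge> 1 / \<beta>\<^sup>2\<close>, with equality unless \<open>c = b\<close>, in which case \<open>p \<le> c\<close>.\<close>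
  have "(c - p) / beta\<^sup>2 \<le> (w / c\<^sup>2) * (c - p)"
  proof (cases "c = b")
    case True
    have "c\<^sup>2 \<le> (beta * sqrt w)\<^sup>2" using c_pos by (intro power_mono) (auto simp: c_def)
    then have "1 / beta\<^sup>2 \<le> w / c\<^sup>2"
      using c_pos assms by (simp add: field_simps power_mult_distrib)
    moreover have "0 \<le> c - p" using True assms by simp
    ultimately show ?thesis by (metis mult_right_mono mult_1 times_divide_eq_left)
  next
    case False
    then have "c = beta * sqrt w" by (auto simp: c_def min_def)
    then have "w / c\<^sup>2 = 1 / beta\<^sup>2" using assms by (simp add: power_mult_distrib)
    then show ?thesis by simp
  qed
  with tangent show ?thesis unfolding c_def by linarith
qed

lemma water_filling_le:
  fixes w b p :: "'a \<Rightarrow> real" and beta :: real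
  assumes "\<forall>i\<in>I. w i > 0" "\<forall>i\<in>I. 0 < p i \<and> p i \<le> b i" "beta > 0"
    and "(\<Sum>i\<in>I. min (b i) (beta * sqrt (w i))) = 1" "(\<Sum>i\<in>I. p i) \<le> 1"
  shows "(\<Sum>i\<in>I. w i / min (b i) (beta * sqrt (w i))) \<le> (\<Sum>i\<in>I. w i / p i)"
proof -
  have "(\<Sum>i\<in>I. w i / min (b i) (beta * sqrt (w i)) + (min (b i) (beta * sqrt (w i)) - p i) / beta\<^sup>2)
        \<le> (\<Sum>i\<in>I. w i / p i)"
    using assms by (intro sum_mono water_filling_term_bound) auto
  moreover have "(\<Sum>i\<in>I. (min (b i) (beta * sqrt (w i)) - p i) / beta\<^sup>2)
      = (1 - (\<Sum>i\<in>I. p i)) / beta\<^sup>2"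
    using assms(4) by (simp add: sum_divide_distrib[symmetric] sum_subtractf)
  moreover have "0 \<le> (1 - (\<Sum>i\<in>I. p i)) / beta\<^sup>2" using assms(5) by simp
  ultimately show ?thesis by (simp add: sum.distrib)
qed

lemma share_le_sigma_ratio:
  fixes r S t :: real
  assumes "0 \<le> r" "r \<le> S" "0 \<le> t"
  shows "r / (S + 1) \<le> ((1 - exp (- r * t)) * S + r * exp (- r * t)) / (S + 1)"
proof -
  have "(1 - exp (- r * t)) * S + r * exp (- r * t) = r + (1 - exp (- r * t)) * (S - r)"
    by (simp add: algebra_simps)
  moreover have "0 \<le> (1 - exp (- r * t)) * (S - r)" using assms by simp
  ultimately show ?thesis using assms by (intro divide_right_mono) auto
qed

lemma weighted_inverse_share_le_Delta_bar:
  assumes "\<forall>l<M. w l > 0" "\<forall>l<M. r l > 0" "eps > 0"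
  shows "(\<Sum>l<M. w l / (r l / (1 + Ssum M r))) + (\<Sum>l<M. w l) \<le> Delta_bar M w eps r"
proof -
  define S where "S = Ssum M r"
  have r_le_S: "r l \<le> S" if "l < M" for l
    unfolding S_def Ssum_def using assms(2) that by (intro member_le_sum) auto
  have "w l / (r l / (1 + S)) \<le> w l * exp (- r l * eps) / r l * exp (eps * S) * (1 + S)"
    if l: "l < M" for l
  proof -
    have "exp (- r l * eps) * exp (eps * S) = exp (eps * (S - r l))"
      by (simp add: mult_exp_exp algebra_simps)
    then have factor: "w l * exp (- r l * eps) / r l * exp (eps * S) * (1 + S)
        = (w l * (1 + S) / r l) * exp (eps * (S - r l))"
      by (simp add: field_simps)
    have "0 \<le> w l * (1 + S) / r l"
      using assms(1,2) l r_le_S[OF l] by (intro divide_nonneg_pos mult_nonneg_nonneg) auto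
    moreover have "1 \<le> exp (eps * (S - r l))" using r_le_S[OF l] assms(3) by simp
    ultimately have "w l * (1 + S) / r l \<le> (w l * (1 + S) / r l) * exp (eps * (S - r l))"
      by (metis mult.right_neutral mult_left_mono)
    then show ?thesis unfolding factor by simp
  qed
  then have "(\<Sum>l<M. w l / (r l / (1 + S)))
      \<le> (\<Sum>l<M. w l * exp (- r l * eps) / r l) * exp (eps * S) * (1 + S)"
    unfolding sum_distrib_right by (intro sum_mono) auto
  then show ?thesis unfolding Delta_bar_def S_def by simp
qed

lemma water_filling_value_le_Delta_bar:
  assumes "\<forall>l<M. w l > 0" "beta > 0" "eps > 0"
    and "(\<Sum>i<M. min (b i) (beta * sqrt (w i))) = 1"
    and "feasible M b eps r"
  shows "(\<Sum>i<M. w i / min (b i) (beta * sqrt (w i)) + w i) \<le> Delta_bar M w eps r"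
proof -
  define S where "S = Ssum M r"
  have r_pos: "\<forall>l<M. r l > 0" using assms(5) by (simp add: feasible_def)
  have S_nonneg: "0 \<le> S" unfolding S_def Ssum_def using r_pos by (intro sum_nonneg) auto
  have share_le_b: "0 < r l / (1 + S) \<and> r l / (1 + S) \<le> b l" if l: "l < M" for l
  proof
    show "0 < r l / (1 + S)" using r_pos l S_nonneg by simp
    have "r l \<le> S" unfolding S_def Ssum_def using r_pos l by (intro member_le_sum) auto
    then have "r l / (S + 1) \<le> ((1 - exp (- r l * eps)) * S + r l * exp (- r l * eps)) / (S + 1)"
      using r_pos l assms(3) by (intro share_le_sigma_ratio) auto
    then have "r l / (1 + S) \<le> sigma M eps r l" unfolding sigma_def S_def by (simp add: add.commute)
    also have "\<dots> \<le> b l" using assms(5) l by (simp add: feasible_def)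
    finally show "r l / (1 + S) \<le> b l" .
  qed
  have "(\<Sum>l<M. r l / (1 + S)) = S / (1 + S)"
    unfolding S_def Ssum_def by (simp add: sum_divide_distrib)
  then have "(\<Sum>l<M. r l / (1 + S)) \<le> 1" using S_nonneg by simp
  then have "(\<Sum>i<M. w i / min (b i) (beta * sqrt (w i))) \<le> (\<Sum>l<M. w l / (r l / (1 + S)))"
    using water_filling_le[of "{..<M}" w "\<lambda>l. r l / (1 + S)" b beta] share_le_b assms(1,2,4)
    by auto
  with weighted_inverse_share_le_Delta_bar[OF assms(1) r_pos assms(3)]
  show ?thesis unfolding S_def by (simp add: sum.distrib)
qed

lemma x_star_pos: "eps > 0 \<Longrightarrow> x_star eps > 0"
proof -
  assume "eps > 0"
  then have "sqrt (1/4) < sqrt (1/4 + 1/eps)" by (intro real_sqrt_less_mono) simp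
  moreover have "sqrt (1/4::real) = 1/2" by (simp add: real_sqrt_divide)
  ultimately show ?thesis by (simp add: x_star_def)
qed

lemma x_star_quadratic: "eps > 0 \<Longrightarrow> eps * ((x_star eps)\<^sup>2 + x_star eps) = 1"
proof -
  assume eps: "eps > 0"
  have "(x_star eps + 1/2)\<^sup>2 = 1/4 + 1/eps" using eps by (simp add: x_star_def)
  then have "(x_star eps)\<^sup>2 + x_star eps = 1/eps" by (simp add: power2_eq_square algebra_simps)
  then show ?thesis using eps by simp
qed

lemma Ssum_r_star:
  assumes "(\<Sum>i<M. min (b i) (beta * sqrt (w i))) = 1"
  shows "Ssum M (r_star w b beta eps) = x_star eps"
  unfolding Ssum_def r_star_def by (simp add: sum_distrib_right[symmetric] assms)

lemma feasible_r_star: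
  assumes "\<forall>l<M. w l > 0" "\<forall>l<M. b l > 0" "beta > 0" "eps > 0"
    and "(\<Sum>i<M. min (b i) (beta * sqrt (w i))) = 1"
  shows "feasible M b eps (r_star w b beta eps)"
  unfolding feasible_def
proof (intro allI impI conjI)
  fix l assume l: "l < M"
  define x where "x = x_star eps"
  define c where "c = min (b l) (beta * sqrt (w l))"
  define a where "a = c * x * eps"
  have x_pos: "x > 0" using x_star_pos assms(4) by (simp add: x_def)
  have c_pos: "c > 0" using assms l by (simp add: c_def)
  have r_l: "r_star w b beta eps l = c * x" by (simp add: r_star_def c_def x_def)
  show "0 < r_star w b beta eps l" using x_pos c_pos r_l by simp
  have "eps * x\<^sup>2 + eps * x = 1"
    using x_star_quadratic[OF assms(4)] by (simp add: x_def distrib_left)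
  moreover have "0 < eps * x" using x_pos assms(4) by simp
  ultimately have "eps * x\<^sup>2 \<le> 1" by linarith
  then have "a * x + c * x \<le> c * (x + 1)"
    using c_pos by (simp add: a_def power2_eq_square algebra_simps)
  moreover have "(1 - exp (- a)) * x + c * x * exp (- a) \<le> a * x + c * x"
    using exp_ge_add_one_self[of "- a"] x_pos c_pos assms(4)
    by (intro add_mono mult_right_mono) (auto simp: a_def intro: mult_left_le)
  ultimately have numerator: "(1 - exp (- a)) * x + c * x * exp (- a) \<le> c * (x + 1)"
    by linarith
  have "Ssum M (r_star w b beta eps) = x" using Ssum_r_star[OF assms(5)] by (simp add: x_def)
  then have "sigma M eps (r_star w b beta eps) l = ((1 - exp (- a)) * x + c * x * exp (- a)) / (x + 1)"
    unfolding sigma_def r_l a_def by simp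
  also have "\<dots> \<le> c" using numerator x_pos by (simp add: pos_divide_le_eq)
  also have "c \<le> b l" by (simp add: c_def)
  finally show "sigma M eps (r_star w b beta eps) l \<le> b l" .
qed

lemma Delta_bar_r_star_eq:
  assumes "\<forall>l<M. w l > 0" "\<forall>l<M. b l > 0" "beta > 0" "eps > 0"
    and "(\<Sum>i<M. min (b i) (beta * sqrt (w i))) = 1"
  defines "c \<equiv> \<lambda>i. min (b i) (beta * sqrt (w i))"
  shows "Delta_bar M w eps (r_star w b beta eps)
    = (\<Sum>l<M. w l / c l * exp (eps * x_star eps * (1 - c l))) * ((1 + x_star eps) / x_star eps)
      + (\<Sum>l<M. w l)"
proof -
  have x_pos: "x_star eps > 0" using x_star_pos assms(4) .
  have "w l * exp (- r_star w b beta eps l * eps) / r_star w b beta eps l * exp (eps * x_star eps)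
      = w l / c l * exp (eps * x_star eps * (1 - c l)) / x_star eps" if "l < M" for l
  proof -
    have "c l > 0" using assms that by (simp add: c_def)
    moreover have "r_star w b beta eps l = c l * x_star eps" by (simp add: r_star_def c_def)
    moreover have "exp (- (c l * x_star eps) * eps) * exp (eps * x_star eps)
        = exp (eps * x_star eps * (1 - c l))"
      by (simp add: mult_exp_exp algebra_simps)
    ultimately show ?thesis using x_pos by (simp add: field_simps)
  qed
  then show ?thesis
    unfolding Delta_bar_def Ssum_r_star[OF assms(5)]
    by (simp add: sum_distrib_right sum_divide_distrib mult.assoc)
qed

lemma tendsto_Delta_bar_r_star:
  assumes "\<forall>l<M. w l > 0" "\<forall>l<M. b l > 0" "beta > 0"
    and "(\<Sum>i<M. min (b i) (beta * sqrt (w i))) = 1"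
  shows "((\<lambda>eps. Delta_bar M w eps (r_star w b beta eps)) \<longlongrightarrow>
            (\<Sum>i<M. w i / min (b i) (beta * sqrt (w i)) + w i)) (at_right 0)"
proof -
  define c where "c i = min (b i) (beta * sqrt (w i))" for i
  define F where "F eps = (\<Sum>l<M. w l / c l * exp (eps * x_star eps * (1 - c l)))
       * ((1 + x_star eps) / x_star eps) + (\<Sum>l<M. w l)" for eps
  have F_eq: "\<forall>\<^sub>F eps in at_right 0. F eps = Delta_bar M w eps (r_star w b beta eps)"
    using eventually_at_right_less[of 0]
    by eventually_elim (simp add: F_def c_def Delta_bar_r_star_eq assms)
  have "((\<lambda>eps::real. eps * x_star eps) \<longlongrightarrow> 0) (at_right 0)"
    unfolding x_star_def by real_asymp
  moreover have "((\<lambda>eps::real. (1 + x_star eps) / x_star eps) \<longlongrightarrow> 1) (at_right 0)"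
    unfolding x_star_def by real_asymp
  ultimately have "(F \<longlongrightarrow> (\<Sum>l<M. w l / c l * exp (0 * (1 - c l))) * 1 + (\<Sum>l<M. w l)) (at_right 0)"
    unfolding F_def by (intro tendsto_intros)
  then have "(F \<longlongrightarrow> (\<Sum>i<M. w i / c i + w i)) (at_right 0)" by (simp add: sum.distrib)
  then show ?thesis using tendsto_cong[OF F_eq] by (simp add: c_def)
qed

lemma Delta_opt_between:
  assumes "\<forall>l<M. w l > 0" "\<forall>l<M. b l > 0" "beta > 0" "eps > 0"
    and "(\<Sum>i<M. min (b i) (beta * sqrt (w i))) = 1"
  shows "(\<Sum>i<M. w i / min (b i) (beta * sqrt (w i)) + w i) \<le> Delta_opt M w b eps"
    and "Delta_opt M w b eps \<le> Delta_bar M w eps (r_star w b beta eps)"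
proof -
  let ?A = "{Delta_bar M w eps r | r. feasible M b eps r}"
  have r_star_feasible: "feasible M b eps (r_star w b beta eps)"
    using feasible_r_star[OF assms] .
  have lower: "\<And>y. y \<in> ?A \<Longrightarrow> (\<Sum>i<M. w i / min (b i) (beta * sqrt (w i)) + w i) \<le> y"
    using water_filling_value_le_Delta_bar[OF assms(1,3,4,5)] by blast
  show "(\<Sum>i<M. w i / min (b i) (beta * sqrt (w i)) + w i) \<le> Delta_opt M w b eps"
    unfolding Delta_opt_def using r_star_feasible lower by (intro cInf_greatest) auto
  have "bdd_below ?A" using lower by (auto simp: bdd_below_def)
  then show "Delta_opt M w b eps \<le> Delta_bar M w eps (r_star w b beta eps)"
    unfolding Delta_opt_def using r_star_feasible by (intro cInf_lower) auto
qed

theorem corollary1: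
  fixes M :: nat and w b :: "nat \<Rightarrow> real" and beta :: real
  assumes "M \<ge> 1"
    and "\<forall>l<M. w l > 0"
    and "\<forall>l<M. b l > 0"
    and "(\<Sum>i<M. b i) \<ge> 1"
    and "0 \<le> beta" and "beta \<le> (MAX l\<in>{..<M}. b l / sqrt (w l))"
    and "(\<Sum>i<M. min (b i) (beta * sqrt (w i))) = 1"
  shows "((\<lambda>eps. \<bar>Delta_bar M w eps (r_star w b beta eps) - Delta_opt M w b eps\<bar>)
            \<longlongrightarrow> 0) (at_right 0)
    \<and> (Delta_opt M w b \<longlongrightarrow>
            (\<Sum>i<M. w i / min (b i) (beta * sqrt (w i)) + w i)) (at_right 0)"
proof -
  define L where "L = (\<Sum>i<M. w i / min (b i) (beta * sqrt (w i)) + w i)"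
  have beta_pos: "beta > 0"
  proof (rule ccontr)
    assume "\<not> beta > 0"
    then have "(\<Sum>i<M. min (b i) (beta * sqrt (w i))) = 0"
      using assms(3,5) by (intro sum.neutral) (auto simp: min_def)
    with assms(7) show False by simp
  qed
  note between = Delta_opt_between[OF assms(2,3) beta_pos _ assms(7)]
  have upper: "((\<lambda>eps. Delta_bar M w eps (r_star w b beta eps)) \<longlongrightarrow> L) (at_right 0)"
    unfolding L_def using tendsto_Delta_bar_r_star[OF assms(2,3) beta_pos assms(7)] .
  have opt: "(Delta_opt M w b \<longlongrightarrow> L) (at_right 0)"
  proof (rule tendsto_sandwich[OF _ _ tendsto_const upper])
    show "\<forall>\<^sub>F eps in at_right 0. L \<le> Delta_opt M w b eps"
      using eventually_at_right_less[of 0] by eventually_elim (simp add: L_def between(1))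
    show "\<forall>\<^sub>F eps in at_right 0. Delta_opt M w b eps \<le> Delta_bar M w eps (r_star w b beta eps)"
      using eventually_at_right_less[of 0] by eventually_elim (simp add: between(2))
  qed
  have "((\<lambda>eps. \<bar>Delta_bar M w eps (r_star w b beta eps) - Delta_opt M w b eps\<bar>) \<longlongrightarrow> \<bar>L - L\<bar>)
      (at_right 0)"
    by (intro tendsto_intros upper opt)
  with opt show ?thesis unfolding L_def by simp
qed

end
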